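(* Let $G$ be an $(n,n,p_s,p_d)$-two-island network with groups $V_1,V_2$ and degree of homophily $h_G=p_s/p_d$, and let the dual opinions evolve according to the dynamics in the context with common resilience $\phi\in(0,1)$, common bias $b$ with $\frac{2}{\phi(h_G-1)+2}\le b<1$, and the symmetric initial condition $x_i(0)=x_0\in(\tfrac12,1)$, $y_i(0)=y_0\in[\tfrac12,x_0]$ for $i\in V_1$, $x_j(0)=1-x_0$, $y_j(0)=1-y_0$ for $j\in V_2$. Let $i\in V_1$. If there exists $T>0$ such that $x_i(t)<\hat x(\phi,h_G,b)$ for all $t\ge T$, then there exists $\mathcal T>T$ such that $x_i(t)$ and $y_i(t)$ are monotonic for $t\ge\mathcal T$, and $$\lim_{t\to\infty}x_i(t)=\hat x(\phi,h_G,b),\qquad \lim_{t\to\infty}y_i(t)=\frac{\phi(h_G+1)\hat x(\phi,h_G,b)+1-\phi}{\phi h_G+2-\phi}.$$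
   Context: Let $n\ge 1$ and $p_s,p_d\in(0,1)$ with $p_s>p_d$ and $np_s,np_d$ positive integers. An $(n,n,p_s,p_d)$-two-island network is an undirected graph (no self-loops) with vertex set $V=V_1\cup V_2$, $V_1\cap V_2=\emptyset$, $|V_1|=|V_2|=n$, such that each node of $V_1$ has exactly $np_s$ neighbours in $V_1$ and $np_d$ neighbours in $V_2$, and each node of $V_2$ has exactly $np_s$ neighbours in $V_2$ and $np_d$ neighbours in $V_1$. Its degree of homophily is $h_G=p_s/p_d>1$. Let $w_{ij}\in\{0,1\}$ be the adjacency matrix, $N_i$ the set of neighbours of $i$, and $d_i=\sum_{j\in N_i}w_{ij}$. Dual opinions dynamics: each $i\in V$ has $x_i(t),y_i(t)\in[0,1]$, $t=0,1,2,\dots$, updated by $$x_i(t+1)=\frac{x_i(t)^{b}s_i(t)}{x_i(t)^{b}s_i(t)+(1-x_i(t))^{b}(d_i-s_i(t))},\qquad y_i(t+1)=\phi\, x_i(t+1)+(1-\phi)\hat y_{i,avg}(t),$$ with $s_i(t)=\sum_{j\in N_i}w_{ij}y_j(t)$ and $\hat y_{i,avg}(t)=\sum_{j\in N_i}\frac{w_{ij}}{d_i}y_j(t)$. For $0<b<1$ define $g(x,b)=\frac{x^{1-b}-(1-x)^{1-b}}{x(1-x)^{1-b}-(1-x)x^{1-b}}$ for $x\in(\tfrac12,1)$ and $g(\tfrac12,b)=\frac2b-2$. $\hat x(\phi,h_G,b)$ denotes the solution $x\in[\tfrac12,1)$ of $g(x,b)=\phi(h_G-1)$ (it lies in $(\tfrac12,1)$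 when $b>\frac{2}{\phi(h_G-1)+2}$ and equals $\tfrac12$ when $b=\frac{2}{\phi(h_G-1)+2}$). *)

theory Defs
  imports "HOL-Analysis.Analysis"
begin

definition two_island ::
  "('a \<Rightarrow> 'a \<Rightarrow> bool) \<Rightarrow> 'a set \<Rightarrow> 'a set \<Rightarrow> nat \<Rightarrow> real \<Rightarrow> real \<Rightarrow> bool" where
  "two_island E V1 V2 n ps pd \<longleftrightarrow>
     n \<ge> 1 \<and> 0 < pd \<and> pd < ps \<and> ps < 1 \<and>
     (\<exists>k::nat. k > 0 \<and> real n * ps = real k) \<and>
     (\<exists>k::nat. k > 0 \<and> real n * pd = real k) \<and>
     finite V1 \<and> finite V2 \<and> V1 \<inter> V2 = {} \<and> card V1 = n \<and> card V2 = n \<and>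
     (\<forall>i j. E i j \<longrightarrow> i \<in> V1 \<union> V2 \<and> j \<in> V1 \<union> V2) \<and>
     (\<forall>i j. E i j \<longleftrightarrow> E j i) \<and>
     (\<forall>i. \<not> E i i) \<and>
     (\<forall>i\<in>V1. real (card {j\<in>V1. E i j}) = real n * ps \<and>
               real (card {j\<in>V2. E i j}) = real n * pd) \<and>
     (\<forall>i\<in>V2. real (card {j\<in>V2. E i j}) = real n * ps \<and>
               real (card {j\<in>V1. E i j}) = real n * pd)"

definition nbrs :: "('a \<Rightarrow> 'a \<Rightarrow> bool) \<Rightarrow> 'a set \<Rightarrow> 'a \<Rightarrow> 'a set" where
  "nbrs E V i = {j\<in>V. E i j}"

text \<open>Dual opinions dynamics with common resilience phi and common bias b
  (w_ij = 1 iff E i j, so s_i is the sum of y_j over neighbours, d_i the degree).\<close>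
definition dual_dynamics ::
  "('a \<Rightarrow> 'a \<Rightarrow> bool) \<Rightarrow> 'a set \<Rightarrow> real \<Rightarrow> real \<Rightarrow>
   (nat \<Rightarrow> 'a \<Rightarrow> real) \<Rightarrow> (nat \<Rightarrow> 'a \<Rightarrow> real) \<Rightarrow> bool" where
  "dual_dynamics E V phi b x y \<longleftrightarrow>
     (\<forall>t. \<forall>i\<in>V.
        let N = nbrs E V i;
            d = real (card N);
            s = (\<Sum>j\<in>N. y t j);
            yavg = (\<Sum>j\<in>N. y t j / d)
        in x (Suc t) i = (x t i powr b * s) /
                           (x t i powr b * s + (1 - x t i) powr b * (d - s))
         \<and> y (Suc t) i = phi * x (Suc t) i + (1 - phi) * yavg)"

definition g_fun :: "real \<Rightarrow> real \<Rightarrow> real" where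
  "g_fun x b = (if x = 1/2 then 2 / b - 2
     else (x powr (1 - b) - (1 - x) powr (1 - b)) /
          (x * (1 - x) powr (1 - b) - (1 - x) * x powr (1 - b)))"

definition x_hat :: "real \<Rightarrow> real \<Rightarrow> real \<Rightarrow> real" where
  "x_hat phi h b = (THE x. 1/2 \<le> x \<and> x < 1 \<and> g_fun x b = phi * (h - 1))"

end

theory Submission
  imports Defs
begin

text \<open>
  By the symmetry of the network and of the initial state, every node of V1 carries the same
  pair (X t, Y t) and every node of V2 carries (1 - X t, 1 - Y t), so the dynamics reduce to a
  planar map that is monotone in both coordinates. Monotonicity propagates the signs of the
  increments of X and Y, which therefore become eventually constant; hence X and Y converge
  and their limits are a fixed point of the map. At a fixed point with X > 1/2 the steady-state
  equation for Y holds exactly when g X = phi (h_G - 1), i.e. X = x_hat. The limit X = 1/2 is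
  excluded by a sub-solution started just above 1/2, which is available because the hypothesis
  x_i(t) < x_hat forces x_hat > 1/2; the same hypothesis keeps the limit below 1. That g is
  strictly increasing follows, in log-odds coordinates, from sinh (c w) < c sinh w for 0 < c < 1.
\<close>

section \<open>Eventually monotone sequences\<close>

lemma opposite_signs_persist:
  fixes a c :: "nat \<Rightarrow> real"
  assumes c_nonneg: "\<And>t. 0 \<le> c t \<Longrightarrow> 0 \<le> a (Suc t) \<Longrightarrow> 0 \<le> c (Suc t)"
    and c_nonpos: "\<And>t. c t \<le> 0 \<Longrightarrow> a (Suc t) \<le> 0 \<Longrightarrow> c (Suc t) \<le> 0"
    and opposite: "\<And>t. a t * c t < 0"
  shows "(\<forall>t. a t < 0 \<and> 0 < c t) \<or> (\<forall>t. 0 < a t \<and> c t < 0)"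
proof -
  have c_pos: "0 < c (Suc t)" if "0 < c t" for t
    using c_nonneg[of t] opposite[of "Suc t"] that by (force simp: mult_less_0_iff)
  have c_neg: "c (Suc t) < 0" if "c t < 0" for t
    using c_nonpos[of t] opposite[of "Suc t"] that by (force simp: mult_less_0_iff)
  consider "0 < c 0" | "c 0 < 0"
    using opposite[of 0] by (auto simp: mult_less_0_iff)
  then show ?thesis
  proof cases
    case 1
    then have c: "0 < c t" for t
      by (induction t) (auto intro: c_pos)
    then have "a t < 0" for t
      using opposite[of t] c[of t] by (auto simp: mult_less_0_iff)
    with c show ?thesis
      by blast
  next
    case 2
    then have c: "c t < 0" for t
      by (induction t) (auto intro: c_neg)
    then have "0 < a t" for t
      using opposite[of t] c[of t] by (auto simp: mult_less_0_iff)
    with c show ?thesis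
      by blast
  qed
qed

lemma eventually_constant_signs:
  fixes a c :: "nat \<Rightarrow> real"
  assumes a_nonneg: "\<And>t. 0 \<le> a t \<Longrightarrow> 0 \<le> c t \<Longrightarrow> 0 \<le> a (Suc t)"
    and a_nonpos: "\<And>t. a t \<le> 0 \<Longrightarrow> c t \<le> 0 \<Longrightarrow> a (Suc t) \<le> 0"
    and c_nonneg: "\<And>t. 0 \<le> c t \<Longrightarrow> 0 \<le> a (Suc t) \<Longrightarrow> 0 \<le> c (Suc t)"
    and c_nonpos: "\<And>t. c t \<le> 0 \<Longrightarrow> a (Suc t) \<le> 0 \<Longrightarrow> c (Suc t) \<le> 0"
  obtains T0 where "(\<forall>t\<ge>T0. 0 \<le> a t) \<or> (\<forall>t\<ge>T0. a t \<le> 0)"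
    and "(\<forall>t\<ge>T0. 0 \<le> c t) \<or> (\<forall>t\<ge>T0. c t \<le> 0)"
proof -
  consider (nonneg) t0 where "0 \<le> a t0" "0 \<le> c t0" | (nonpos) t0 where "a t0 \<le> 0" "c t0 \<le> 0"
    | (opposite) "\<And>t. a t * c t < 0"
  proof (cases "\<forall>t. a t * c t < 0")
    case False
    then obtain t where "0 \<le> a t * c t"
      by (auto simp: not_less)
    with that(1,2) show ?thesis
      by (auto simp: zero_le_mult_iff)
  qed (use that(3) in blast)
  then show ?thesis
  proof cases
    case nonneg
    have "0 \<le> a t \<and> 0 \<le> c t" if "t0 \<le> t" for t
      using that by (induction rule: dec_induct) (use nonneg a_nonneg c_nonneg in auto)
    then show ?thesis
      by (intro that[of t0]) auto
  next
    case nonpos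
    have "a t \<le> 0 \<and> c t \<le> 0" if "t0 \<le> t" for t
      using that by (induction rule: dec_induct) (use nonpos a_nonpos c_nonpos in auto)
    then show ?thesis
      by (intro that[of t0]) auto
  next
    case opposite
    have "(\<forall>t. a t < 0 \<and> 0 < c t) \<or> (\<forall>t. 0 < a t \<and> c t < 0)"
      using c_nonneg c_nonpos opposite by (rule opposite_signs_persist)
    then show ?thesis
      by (intro that[of 0]) (auto intro: less_imp_le)
  qed
qed

lemma monotone_on_atLeast_SucI:
  fixes f :: "nat \<Rightarrow> 'a::order"
  assumes "\<And>t. T \<le> t \<Longrightarrow> f t \<le> f (Suc t)"
  shows "monotone_on {T..} (\<le>) (\<le>) f"
proof (rule monotone_onI)
  fix m n assume "m \<in> {T..}" "m \<le> n"
  show "f m \<le> f n"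
  proof (rule lift_Suc_mono_le_ivl[where N = "{T..}"])
    show "f t \<le> f (Suc t)" if "t \<in> {T..}" for t
      using assms that by simp
  qed (use \<open>m \<in> {T..}\<close> \<open>m \<le> n\<close> in auto)
qed

lemma antitone_on_atLeast_SucI:
  fixes f :: "nat \<Rightarrow> 'a::order"
  assumes "\<And>t. T \<le> t \<Longrightarrow> f (Suc t) \<le> f t"
  shows "monotone_on {T..} (\<le>) (\<ge>) f"
proof (rule monotone_onI)
  fix m n assume "m \<in> {T..}" "m \<le> n"
  show "f n \<le> f m"
  proof (rule lift_Suc_antimono_le_ivl[where N = "{T..}"])
    show "f (Suc t) \<le> f t" if "t \<in> {T..}" for t
      using assms that by simp
  qed (use \<open>m \<in> {T..}\<close> \<open>m \<le> n\<close> in auto)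
qed

lemma convergent_if_eventually_monotone_bounded:
  fixes f :: "nat \<Rightarrow> real"
  assumes "monotone_on {T..} (\<le>) (\<le>) f \<or> monotone_on {T..} (\<le>) (\<ge>) f"
    and "\<And>t. \<bar>f t\<bar> \<le> B"
  shows "convergent f"
proof -
  have "Bseq (\<lambda>n. f (n + T))"
    using assms(2) by (intro BseqI') auto
  from assms(1) show ?thesis
  proof
    assume mono: "monotone_on {T..} (\<le>) (\<le>) f"
    show ?thesis
      by (rule Bseq_monoseq_convergent'_inc[OF \<open>Bseq _\<close>]) (simp add: monotone_onD[OF mono])
  next
    assume anti: "monotone_on {T..} (\<le>) (\<ge>) f"
    show ?thesis
      by (rule Bseq_monoseq_convergent'_dec[OF \<open>Bseq _\<close>]) (simp add: monotone_onD[OF anti])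
  qed
qed

section \<open>The function g and the threshold x_hat\<close>

lemma sinh_scaled_less:
  fixes c w :: real
  assumes "0 < c" "c < 1" "0 < w"
  shows "sinh (c * w) < c * sinh w"
proof -
  define q where "q u = c * sinh u - sinh (c * u)" for u :: real
  have "q 0 < q w"
  proof (rule DERIV_pos_imp_increasing_open[OF \<open>0 < w\<close>])
    fix u :: real assume u: "0 < u" "u < w"
    have "(q has_real_derivative c * (cosh u - cosh (c * u))) (at u)"
      unfolding q_def by (rule derivative_eq_intros refl | simp)+ (simp add: algebra_simps)
    moreover have "cosh (c * u) < cosh u"
      using assms u by (subst cosh_real_nonneg_less_iff) auto
    ultimately show "\<exists>y. (q has_real_derivative y) (at u) \<and> 0 < y"
      using assms by auto
  qed (unfold q_def, intro continuous_intros)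
  then show ?thesis by (simp add: q_def)
qed

definition g_log_odds :: "real \<Rightarrow> real \<Rightarrow> real" where
  "g_log_odds c w = (exp (c * w) - 1) * (1 + exp w) / (exp w - exp (c * w))"

lemma g_log_odds_denominator_pos: "c < 1 \<Longrightarrow> 0 < w \<Longrightarrow> 0 < exp w - exp (c * (w :: real))"
  by simp

lemma g_log_odds_has_derivative:
  fixes c w :: real
  assumes "c < 1" "0 < w"
  shows "(g_log_odds c has_real_derivative
           2 * exp w * exp (c * w) * (c * sinh w - sinh (c * w)) / (exp w - exp (c * w))\<^sup>2) (at w)"
proof -
  have ne: "exp w - exp (c * w) \<noteq> 0"
    using g_log_odds_denominator_pos[OF assms] by linarith
  have numerator: "2 * exp w * exp (c * w) * (c * sinh w - sinh (c * w))
      = c * exp (c * w) * ((exp w)\<^sup>2 - 1) - exp w * ((exp (c * w))\<^sup>2 - 1)"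
    by (simp add: sinh_def exp_minus field_simps power2_eq_square)
  show ?thesis
    unfolding g_log_odds_def[abs_def] numerator
    apply (rule derivative_eq_intros refl)+
    using ne apply simp
    apply (simp add: power2_eq_square algebra_simps)
    done
qed

lemma g_log_odds_continuous_on:
  fixes c :: real
  assumes "c < 1"
  shows "continuous_on {0<..} (g_log_odds c)"
proof -
  have "\<forall>u\<in>{0<..}. exp u - exp (c * u) \<noteq> 0"
    using g_log_odds_denominator_pos[OF assms] by force
  then show ?thesis
    unfolding g_log_odds_def[abs_def] by (intro continuous_intros) auto
qed

lemma g_log_odds_strict_mono:
  fixes c :: real
  assumes "0 < c" "c < 1"
  shows "strict_mono_on {0<..} (g_log_odds c)"
proof (rule strict_mono_onI)
  fix w1 w2 :: real
  assume w: "w1 \<in> {0<..}" "w2 \<in> {0<..}" "w1 < w2"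
  show "g_log_odds c w1 < g_log_odds c w2"
  proof (rule DERIV_pos_imp_increasing_open[OF \<open>w1 < w2\<close>])
    fix u assume "w1 < u" "u < w2"
    with w have "0 < u" by simp
    have "exp u - exp (c * u) \<noteq> 0"
      using g_log_odds_denominator_pos[OF \<open>c < 1\<close> \<open>0 < u\<close>] by linarith
    moreover have "sinh (c * u) < c * sinh u"
      using sinh_scaled_less[OF assms \<open>0 < u\<close>] .
    ultimately show "\<exists>y. (g_log_odds c has_real_derivative y) (at u) \<and> 0 < y"
      using g_log_odds_has_derivative[OF \<open>c < 1\<close> \<open>0 < u\<close>] by force
  next
    show "continuous_on {w1..w2} (g_log_odds c)"
      using w by (intro continuous_on_subset[OF g_log_odds_continuous_on[OF \<open>c < 1\<close>]]) auto
  qed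
qed

lemma g_log_odds_tendsto_0:
  fixes c :: real
  assumes "c < 1"
  shows "(g_log_odds c \<longlongrightarrow> 2 * c / (1 - c)) (at_right 0)"
proof -
  have diff_quot: "((\<lambda>w. (exp (a * w) - 1) / w) \<longlongrightarrow> a) (at_right 0)" for a :: real
  proof -
    have "((\<lambda>w. exp (a * w)) has_real_derivative a) (at 0 within {0<..})"
      by (rule derivative_eq_intros refl)+ simp
    then show ?thesis by (simp add: has_field_derivative_iff)
  qed
  have "((\<lambda>w. (exp (c * w) - 1) / w * (1 + exp w) / ((exp (1 * w) - 1) / w - (exp (c * w) - 1) / w))
          \<longlongrightarrow> c * (1 + exp 0) / (1 - c)) (at_right 0)"
    using assms by (intro diff_quot tendsto_intros) auto
  then have "((\<lambda>w. (exp (c * w) - 1) / w * (1 + exp w) / ((exp (1 * w) - 1) / w - (exp (c * w) - 1) / w))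
          \<longlongrightarrow> 2 * c / (1 - c)) (at_right 0)"
    by (simp add: mult.commute)
  moreover have "\<forall>\<^sub>F w in at_right 0.
      (exp (c * w) - 1) / w * (1 + exp w) / ((exp (1 * w) - 1) / w - (exp (c * w) - 1) / w)
      = g_log_odds c w"
    unfolding eventually_at_right_field
  proof (intro exI[of _ 1] conjI allI impI)
    fix w :: real assume "0 < w" "w < 1"
    then show "(exp (c * w) - 1) / w * (1 + exp w) / ((exp (1 * w) - 1) / w - (exp (c * w) - 1) / w)
      = g_log_odds c w"
      using g_log_odds_denominator_pos[OF assms, of w] by (simp add: g_log_odds_def field_simps)
  qed simp
  ultimately show ?thesis
    by (rule Lim_transform_eventually)
qed

lemma g_log_odds_gt_limit:
  fixes c w :: real
  assumes "0 < c" "c < 1" "0 < w"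
  shows "2 * c / (1 - c) < g_log_odds c w"
proof -
  note mono = g_log_odds_strict_mono[OF assms(1,2)]
  have "\<forall>\<^sub>F u in at_right 0. g_log_odds c u \<le> g_log_odds c (w / 2)"
    unfolding eventually_at_right_field
    using assms by (intro exI[of _ "w / 2"]) (auto intro!: less_imp_le[OF strict_mono_onD[OF mono]])
  then have "2 * c / (1 - c) \<le> g_log_odds c (w / 2)"
    by (intro tendsto_upperbound[OF g_log_odds_tendsto_0[OF assms(2)]]) auto
  also have "\<dots> < g_log_odds c w"
    using assms by (intro strict_mono_onD[OF mono]) auto
  finally show ?thesis .
qed

lemma g_log_odds_ge:
  fixes c w :: real
  assumes "0 < c" "c < 1" "0 < w"
  shows "exp (c * w) - 1 \<le> g_log_odds c w"
proof -
  have den: "0 < exp w - exp (c * w)"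
    using g_log_odds_denominator_pos[OF assms(2,3)] .
  have "exp w - exp (c * w) \<le> 1 + exp w"
    using exp_ge_zero[of "c * w"] by linarith
  then have "(exp (c * w) - 1) * (exp w - exp (c * w)) \<le> (exp (c * w) - 1) * (1 + exp w)"
    using assms by (intro mult_left_mono) simp_all
  then show ?thesis
    unfolding g_log_odds_def using den by (simp add: pos_le_divide_eq)
qed

lemma powr_odds_less:
  fixes c x :: real
  assumes "c < 1" "1/2 < x" "x < 1"
  shows "(1 - x) * x powr c < x * (1 - x) powr c"
proof -
  have "(x / (1 - x)) powr c < (x / (1 - x)) powr 1"
    using assms by (intro powr_less_mono) (auto simp: field_simps)
  then have "x powr c / (1 - x) powr c < x / (1 - x)"
    using assms by (simp add: powr_divide)
  then show ?thesis
    using assms by (simp add: field_simps)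
qed

lemma ln_odds_strict_mono:
  fixes u v :: real
  assumes "0 < u" "u < v" "v < 1"
  shows "ln (u / (1 - u)) < ln (v / (1 - v))"
proof -
  have "u / (1 - u) < v / (1 - v)"
    using assms by (simp add: field_simps)
  then show ?thesis
    using assms by simp
qed

lemma g_fun_eq_g_log_odds:
  fixes b x :: real
  assumes "0 < b" "b < 1" "1/2 < x" "x < 1"
  shows "g_fun x b = g_log_odds (1 - b) (ln (x / (1 - x)))"
proof -
  define P where "P = x powr (1 - b)"
  define Q where "Q = (1 - x) powr (1 - b)"
  have pos: "0 < P" "0 < Q" "0 < 1 - x"
    using assms by (auto simp: P_def Q_def)
  have den: "(1 - x) * P < x * Q"
    unfolding P_def Q_def using assms by (intro powr_odds_less) auto
  have "exp ((1 - b) * ln (x / (1 - x))) = (x / (1 - x)) powr (1 - b)"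
    using assms by (simp add: powr_def)
  also have "\<dots> = P / Q"
    using assms by (simp add: powr_divide P_def Q_def)
  finally have E: "exp ((1 - b) * ln (x / (1 - x))) = P / Q" .
  have R: "exp (ln (x / (1 - x))) = x / (1 - x)"
    using assms by simp
  define D where "D = x * Q - (1 - x) * P"
  have "D \<noteq> 0"
    using den by (simp add: D_def)
  have odds: "1 + x / (1 - x) = 1 / (1 - x)" "x / (1 - x) - P / Q = D / ((1 - x) * Q)"
    using pos by (simp_all add: D_def field_simps)
  have "g_log_odds (1 - b) (ln (x / (1 - x))) = (P / Q - 1) * (1 / (1 - x)) / (D / ((1 - x) * Q))"
    unfolding g_log_odds_def E R odds ..
  also have "\<dots> = (P - Q) / D"
    using pos \<open>D \<noteq> 0\<close> by (simp add: field_simps)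
  also have "\<dots> = g_fun x b"
    using assms by (simp add: g_fun_def P_def Q_def D_def)
  finally show ?thesis ..
qed

lemma g_fun_strict_mono:
  fixes b :: real
  assumes "0 < b" "b < 1"
  shows "strict_mono_on {1/2..<1} (\<lambda>x. g_fun x b)"
proof (rule strict_mono_onI)
  fix u v :: real
  assume uv: "u \<in> {1/2..<1}" "v \<in> {1/2..<1}" "u < v"
  have c: "0 < 1 - b" "1 - b < 1"
    using assms by auto
  have w: "0 < ln (v / (1 - v))"
    using uv by (simp add: field_simps)
  show "g_fun u b < g_fun v b"
  proof (cases "u = 1/2")
    case True
    have "2 / b - 2 = 2 * (1 - b) / (1 - (1 - b))"
      using assms by (simp add: field_simps)
    then show ?thesis
      using g_log_odds_gt_limit[OF c w] g_fun_eq_g_log_odds[OF assms, of v] uv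
      by (simp add: True g_fun_def)
  next
    case False
    then have u: "1/2 < u"
      using uv by simp
    then have "g_log_odds (1 - b) (ln (u / (1 - u))) < g_log_odds (1 - b) (ln (v / (1 - v)))"
      using uv w by (intro strict_mono_onD[OF g_log_odds_strict_mono[OF c]] ln_odds_strict_mono)
        (auto simp: field_simps)
    then show ?thesis
      using g_fun_eq_g_log_odds[OF assms u] g_fun_eq_g_log_odds[OF assms, of v] uv u by simp
  qed
qed

lemma g_log_odds_attains:
  fixes c K :: real
  assumes c: "0 < c" "c < 1" and K: "2 * c / (1 - c) < K"
  obtains w where "0 < w" "g_log_odds c w = K"
proof -
  have "\<forall>\<^sub>F w in at_right 0. g_log_odds c w < K"
    using K by (rule order_tendstoD(2)[OF g_log_odds_tendsto_0[OF c(2)]])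
  then have "\<forall>\<^sub>F w in at_right 0. 0 < w \<and> g_log_odds c w < K"
    by (rule eventually_conj[OF eventually_at_right_less])
  then obtain w1 where w1: "0 < w1" "g_log_odds c w1 < K"
    by (auto dest: eventually_happens)
  define w2 where "w2 = max w1 (ln (K + 1) / c)"
  have w2: "w1 \<le> w2" "0 < w2"
    using w1 by (auto simp: w2_def)
  have "ln (K + 1) / c \<le> w2"
    by (simp add: w2_def)
  then have "ln (K + 1) \<le> c * w2"
    using c by (simp add: pos_divide_le_eq mult.commute)
  have "0 < 2 * c / (1 - c)"
    using c by simp
  then have "K + 1 = exp (ln (K + 1))"
    using K by simp
  also have "\<dots> \<le> exp (c * w2)"
    using \<open>ln (K + 1) \<le> c * w2\<close> by simp
  finally have "K \<le> g_log_odds c w2"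
    using g_log_odds_ge[OF c w2(2)] by simp
  moreover have "continuous_on {w1..w2} (g_log_odds c)"
    using w1 by (intro continuous_on_subset[OF g_log_odds_continuous_on[OF c(2)]]) auto
  ultimately obtain w where "w1 \<le> w" "w \<le> w2" "g_log_odds c w = K"
    using IVT'[of "g_log_odds c" w1 K w2] w1 w2 by auto
  with w1 show ?thesis
    by (intro that[of w]) auto
qed

lemma g_fun_attains:
  fixes b K :: real
  assumes b: "0 < b" "b < 1" and K: "2 / b - 2 \<le> K"
  shows "\<exists>x. 1/2 \<le> x \<and> x < 1 \<and> g_fun x b = K"
proof (cases "K = 2 / b - 2")
  case True
  then show ?thesis
    by (intro exI[of _ "1/2"]) (simp add: g_fun_def)
next
  case False
  have "2 * (1 - b) / (1 - (1 - b)) < K"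
    using K False b by (simp add: field_simps)
  then obtain w where w: "0 < w" "g_log_odds (1 - b) w = K"
    using g_log_odds_attains[of "1 - b" K] b by auto
  define x where "x = exp w / (1 + exp w)"
  have "0 < 1 + exp w"
    by (simp add: add_pos_pos)
  then have x: "1/2 < x" "x < 1" and "x / (1 - x) = exp w"
    using w by (simp_all add: x_def field_simps)
  then have "g_fun x b = K"
    using g_fun_eq_g_log_odds[OF b x] w by simp
  with x show ?thesis
    by (intro exI[of _ x]) simp
qed

lemma x_hat_iff:
  fixes phi h b x :: real
  assumes b: "0 < b" "b < 1" and K: "0 < phi * (h - 1)" "2 / (phi * (h - 1) + 2) \<le> b"
  shows "(1/2 \<le> x \<and> x < 1 \<and> g_fun x b = phi * (h - 1)) \<longleftrightarrow> x = x_hat phi h b"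
proof -
  have "2 / b - 2 \<le> phi * (h - 1)"
    using K b by (simp add: field_simps)
  then obtain x0 where x0: "1/2 \<le> x0" "x0 < 1" "g_fun x0 b = phi * (h - 1)"
    using g_fun_attains[OF b] by blast
  have inj: "inj_on (\<lambda>x. g_fun x b) {1/2..<1}"
    by (rule strict_mono_on_imp_inj_on[OF g_fun_strict_mono[OF b]])
  have unique: "\<exists>!x. 1/2 \<le> x \<and> x < 1 \<and> g_fun x b = phi * (h - 1)"
  proof (rule ex1I[of _ x0])
    fix y assume "1/2 \<le> y \<and> y < 1 \<and> g_fun y b = phi * (h - 1)"
    then show "y = x0"
      using inj_onD[OF inj, of y x0] x0 by auto
  qed (use x0 in simp)
  show ?thesis
    unfolding x_hat_def using theI'[OF unique] unique by blast
qed

section \<open>The symmetric two-island map\<close>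

text \<open>The neighbourhood average of y seen by a node of V1 when V1 holds y and V2 holds 1 - y.\<close>

definition island_avg :: "real \<Rightarrow> real \<Rightarrow> real \<Rightarrow> real" where
  "island_avg ps pd y = (ps * y + pd * (1 - y)) / (ps + pd)"

text \<open>The update of x_i in terms of the neighbour average m = s_i / d_i.\<close>

definition biased_update :: "real \<Rightarrow> real \<Rightarrow> real \<Rightarrow> real" where
  "biased_update b x m = x powr b * m / (x powr b * m + (1 - x) powr b * (1 - m))"

definition equilibrium_avg :: "real \<Rightarrow> real \<Rightarrow> real" where
  "equilibrium_avg b x = x powr (1 - b) / (x powr (1 - b) + (1 - x) powr (1 - b))"

lemma island_avg_diff:
  "island_avg ps pd y' - island_avg ps pd y = (ps - pd) * (y' - y) / (ps + pd)"
proof -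
  have "(ps * y' + pd * (1 - y')) - (ps * y + pd * (1 - y)) = (ps - pd) * (y' - y)"
    by (simp add: algebra_simps)
  then show ?thesis
    unfolding island_avg_def by (metis diff_divide_distrib)
qed

lemma island_avg_mono:
  assumes "0 < pd" "pd < ps" "y \<le> y'"
  shows "island_avg ps pd y \<le> island_avg ps pd y'"
proof -
  have "0 \<le> (ps - pd) * (y' - y) / (ps + pd)"
    using assms by simp
  then show ?thesis
    using island_avg_diff[of ps pd y' y] by simp
qed

lemma island_avg_bounds:
  assumes "0 < pd" "pd < ps" "1/2 \<le> y" "y \<le> 1"
  shows "1/2 \<le> island_avg ps pd y" "island_avg ps pd y < 1"
proof -
  have "island_avg ps pd (1/2) = 1/2"
    using assms by (simp add: island_avg_def field_simps)
  then show "1/2 \<le> island_avg ps pd y"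
    using island_avg_mono[OF assms(1,2,3)] by simp
  have "ps * y + pd * (1 - y) = (ps + pd) - (ps * (1 - y) + pd * y)"
    by (simp add: algebra_simps)
  moreover have "0 \<le> ps * (1 - y)" "0 < pd * y"
    using assms by simp_all
  ultimately have "ps * y + pd * (1 - y) < ps + pd"
    by linarith
  then show "island_avg ps pd y < 1"
    using assms by (simp add: island_avg_def)
qed

lemma island_avg_minus_self:
  assumes "0 < pd" "pd < ps"
  shows "island_avg ps pd y - y = pd * (1 - 2 * island_avg ps pd y) / (ps - pd)"
proof -
  have "(ps - pd) * (island_avg ps pd y - y) = pd * (1 - 2 * island_avg ps pd y)"
    using assms by (simp add: island_avg_def field_simps)
  then show ?thesis
    using assms by (simp add: eq_divide_eq mult.commute)
qed

lemma island_avg_inverse: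
  assumes "0 < pd" "pd < ps"
  shows "island_avg ps pd (((ps + pd) * m - pd) / (ps - pd)) = m"
proof -
  define y where "y = ((ps + pd) * m - pd) / (ps - pd)"
  have "(ps - pd) * y = (ps + pd) * m - pd"
    using assms by (simp add: y_def)
  moreover have "island_avg ps pd y = (pd + (ps - pd) * y) / (ps + pd)"
    by (simp add: island_avg_def algebra_simps)
  ultimately show ?thesis
    using assms by (simp add: y_def[symmetric])
qed

lemma biased_update_mono:
  fixes b x x' m m' :: real
  assumes "0 < b" "0 < x" "x \<le> x'" "x' < 1" "0 < m" "m \<le> m'" "m' < 1"
  shows "biased_update b x m \<le> biased_update b x' m'"
proof -
  define A where "A = x powr b * m"
  define B where "B = (1 - x) powr b * (1 - m)"
  define A' where "A' = x' powr b * m'"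
  define B' where "B' = (1 - x') powr b * (1 - m')"
  have "0 < A" "A \<le> A'"
    unfolding A_def A'_def using assms by (auto intro!: mult_mono powr_mono2)
  moreover have "0 < B'" "B' \<le> B"
    unfolding B_def B'_def using assms by (auto intro!: mult_mono powr_mono2)
  ultimately have "A * B' \<le> A' * B"
    by (intro mult_mono) auto
  with \<open>0 < A\<close> \<open>0 < B'\<close> \<open>B' \<le> B\<close> \<open>A \<le> A'\<close> have "A / (A + B) \<le> A' / (A' + B')"
    by (simp add: field_simps)
  then show ?thesis
    by (simp add: biased_update_def A_def B_def A'_def B'_def)
qed

lemma biased_update_bounds:
  fixes b x m :: real
  assumes "0 < b" "1/2 < x" "x < 1" "1/2 \<le> m" "m < 1"
  shows "1/2 < biased_update b x m" "biased_update b x m < 1"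
proof -
  have "(1 - x) powr b < x powr b"
    using assms by (intro powr_less_mono2) auto
  then have "(1 - x) powr b * (1 - m) < x powr b * m"
    using assms by (intro mult_less_le_imp_less) auto
  moreover have "0 < (1 - x) powr b * (1 - m)"
    using assms by simp
  ultimately show "1/2 < biased_update b x m" "biased_update b x m < 1"
    by (simp_all add: biased_update_def field_simps)
qed

lemma biased_update_complement:
  fixes b x m :: real
  assumes "0 < x" "x < 1" "0 < m" "m < 1"
  shows "biased_update b (1 - x) (1 - m) = 1 - biased_update b x m"
proof -
  have "0 < x powr b * m + (1 - x) powr b * (1 - m)"
    using assms by (intro add_pos_pos mult_pos_pos) auto
  then show ?thesis
    by (simp add: biased_update_def field_simps)
qed

lemma biased_update_scaled:
  fixes b x d m :: real
  assumes "0 < d"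
  shows "x powr b * (d * m) / (x powr b * (d * m) + (1 - x) powr b * (d - d * m)) = biased_update b x m"
proof -
  have "x powr b * (d * m) / (x powr b * (d * m) + (1 - x) powr b * (d - d * m))
      = (d * (x powr b * m)) / (d * (x powr b * m + (1 - x) powr b * (1 - m)))"
    by (simp add: algebra_simps)
  also have "\<dots> = biased_update b x m"
    using assms by (simp add: biased_update_def)
  finally show ?thesis .
qed

lemma biased_update_fixed_iff:
  fixes b x m :: real
  assumes "0 < x" "x < 1" "0 < m" "m < 1"
  shows "biased_update b x m = x \<longleftrightarrow> m = equilibrium_avg b x"
proof -
  define A where "A = x powr b"
  define B where "B = (1 - x) powr b"
  define P where "P = x powr (1 - b)"
  define Q where "Q = (1 - x) powr (1 - b)"
  have pos: "0 < A" "0 < B" "0 < P" "0 < Q"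
    using assms by (auto simp: A_def B_def P_def Q_def)
  have x: "x = A * P" and x': "1 - x = B * Q"
    using assms by (simp_all add: A_def B_def P_def Q_def powr_add[symmetric])
  have "0 < A * m + B * (1 - m)"
    using pos assms by (intro add_pos_pos mult_pos_pos) auto
  then have "biased_update b x m = x \<longleftrightarrow> A * m = x * (A * m + B * (1 - m))"
    by (simp add: biased_update_def A_def[symmetric] B_def[symmetric] divide_eq_eq)
  also have "\<dots> \<longleftrightarrow> A * m * (1 - x) = x * B * (1 - m)"
    by (simp add: algebra_simps)
  also have "\<dots> \<longleftrightarrow> A * B * (m * Q) = A * B * ((1 - m) * P)"
    by (subst (2) x, subst x') (simp add: ac_simps)
  also have "\<dots> \<longleftrightarrow> m * Q = (1 - m) * P"
    using pos by simp
  also have "\<dots> \<longleftrightarrow> m * (P + Q) = P"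
    by (auto simp: algebra_simps)
  also have "\<dots> \<longleftrightarrow> m = P / (P + Q)"
    using pos by (simp add: eq_divide_eq)
  finally show ?thesis
    by (simp add: equilibrium_avg_def P_def Q_def)
qed

lemma equilibrium_avg_bounds:
  assumes "0 < x" "x < 1"
  shows "0 < equilibrium_avg b x" "equilibrium_avg b x < 1"
  using assms by (simp_all add: equilibrium_avg_def add_pos_pos)

text \<open>
  At an equilibrium average, the defect of the y-equation has the sign of phi (h_G - 1) - g x;
  this is how g, and hence x_hat, enters the limit.
\<close>

lemma equilibrium_gap:
  fixes ps pd phi b x y :: real
  assumes pd: "0 < pd" "pd < ps" and b: "0 < b" "b < 1" and x: "1/2 < x" "x < 1"
    and eq: "island_avg ps pd y = equilibrium_avg b x"
  obtains c where "0 < c"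
    "phi * x + (1 - phi) * island_avg ps pd y - y = c * (phi * (ps / pd - 1) - g_fun x b)"
proof -
  define P where "P = x powr (1 - b)"
  define Q where "Q = (1 - x) powr (1 - b)"
  define D where "D = x * Q - (1 - x) * P"
  define m where "m = island_avg ps pd y"
  have pos: "0 < P" "0 < Q" "0 < D"
    using x powr_odds_less[of "1 - b" x] b by (auto simp: P_def Q_def D_def)
  have m: "m = P / (P + Q)"
    using eq by (simp add: m_def equilibrium_avg_def P_def Q_def)
  have g: "g_fun x b = (P - Q) / D"
    using x by (simp add: g_fun_def P_def Q_def D_def)
  have xm: "x - m = D / (P + Q)"
    using pos by (simp add: m D_def field_simps)
  have "m - y = pd * (1 - 2 * m) / (ps - pd)"
    using island_avg_minus_self[OF pd] by (simp add: m_def)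
  also have "1 - 2 * m = (Q - P) / (P + Q)"
    using pos by (simp add: m field_simps)
  finally have my: "m - y = pd * (Q - P) / ((ps - pd) * (P + Q))"
    by simp
  define k where "k = ps - pd"
  define S where "S = P + Q"
  have nz: "k \<noteq> 0" "S \<noteq> 0" "pd \<noteq> 0" "D \<noteq> 0"
    using pos pd by (auto simp: k_def S_def)
  show ?thesis
  proof (rule that)
    show "0 < pd * D / (k * S)"
      using pos pd by (simp add: k_def S_def)
    have "phi * x + (1 - phi) * m - y = phi * (x - m) + (m - y)"
      by (simp add: algebra_simps)
    also have "\<dots> = phi * (D / S) + pd * (Q - P) / (k * S)"
      by (simp only: xm my k_def S_def)
    also have "\<dots> = pd * D / (k * S) * (phi * (k / pd) - (P - Q) / D)"
      using nz by (simp add: field_simps)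
    also have "k / pd = ps / pd - 1"
      using pd by (simp add: k_def field_simps)
    finally show "phi * x + (1 - phi) * island_avg ps pd y - y
        = pd * D / (k * S) * (phi * (ps / pd - 1) - g_fun x b)"
      by (simp add: g m_def)
  qed
qed

lemma island_steady_y:
  fixes ps pd phi x y :: real
  assumes "0 < pd" "pd < ps" "0 \<le> phi" "y = phi * x + (1 - phi) * island_avg ps pd y"
  shows "y = (phi * (ps / pd + 1) * x + 1 - phi) / (phi * (ps / pd) + 2 - phi)"
proof -
  have "1 < ps / pd"
    using assms by simp
  then have "0 \<le> phi * (ps / pd - 1)"
    using assms by simp
  then have den: "0 < phi * (ps / pd) + 2 - phi"
    by (simp add: algebra_simps)
  have "y * (ps + pd) = phi * x * (ps + pd) + (1 - phi) * (ps * y + pd * (1 - y))"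
    using assms by (subst assms(4)) (simp add: island_avg_def field_simps)
  then have "y * (phi * (ps / pd) + 2 - phi) = phi * (ps / pd + 1) * x + 1 - phi"
    using assms by (simp add: field_simps)
  then show ?thesis
    using den by (simp add: eq_divide_eq)
qed

section \<open>Convergence of the reduced dynamics\<close>

lemma island_step_bounds:
  fixes ps pd phi b x y :: real
  assumes pd: "0 < pd" "pd < ps" and phi: "0 < phi" "phi < 1" and "0 < b"
    and x: "1/2 < x" "x < 1" and y: "1/2 \<le> y" "y < 1"
  defines "x' \<equiv> biased_update b x (island_avg ps pd y)"
  shows "1/2 < x'" "x' < 1"
    "1/2 < phi * x' + (1 - phi) * island_avg ps pd y" "phi * x' + (1 - phi) * island_avg ps pd y < 1"
proof -
  have m: "1/2 \<le> island_avg ps pd y" "island_avg ps pd y < 1"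
    using island_avg_bounds[OF pd y(1)] y by auto
  then show x': "1/2 < x'" "x' < 1"
    unfolding x'_def using biased_update_bounds[OF \<open>0 < b\<close> x] by auto
  have "0 < phi * (x' - 1/2)" "0 \<le> (1 - phi) * (island_avg ps pd y - 1/2)"
    using phi x' m by simp_all
  moreover have "phi * x' + (1 - phi) * island_avg ps pd y
      = 1/2 + phi * (x' - 1/2) + (1 - phi) * (island_avg ps pd y - 1/2)"
    by (simp add: field_simps)
  ultimately show "1/2 < phi * x' + (1 - phi) * island_avg ps pd y"
    by linarith
  have "0 < phi * (1 - x')" "0 < (1 - phi) * (1 - island_avg ps pd y)"
    using phi x' m by simp_all
  moreover have "phi * x' + (1 - phi) * island_avg ps pd y
      = 1 - phi * (1 - x') - (1 - phi) * (1 - island_avg ps pd y)"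
    by (simp add: algebra_simps)
  ultimately show "phi * x' + (1 - phi) * island_avg ps pd y < 1"
    by linarith
qed

locale island_orbit =
  fixes ps pd phi b :: real and X Y :: "nat \<Rightarrow> real"
  assumes pd: "0 < pd" "pd < ps" and phi: "0 < phi" "phi < 1" and b: "0 < b" "b < 1"
    and X_Suc: "\<And>t. X (Suc t) = biased_update b (X t) (island_avg ps pd (Y t))"
    and Y_Suc: "\<And>t. Y (Suc t) = phi * X (Suc t) + (1 - phi) * island_avg ps pd (Y t)"
    and X_0: "1/2 < X 0" "X 0 < 1" and Y_0: "1/2 \<le> Y 0" "Y 0 < 1"
begin

lemma bounds: "1/2 < X t" "X t < 1" "1/2 \<le> Y t" "Y t < 1"
proof (induction t)
  case (Suc t)
  then show "1/2 < X (Suc t)" "X (Suc t) < 1" "1/2 \<le> Y (Suc t)" "Y (Suc t) < 1"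
    using island_step_bounds[OF pd phi b(1), of "X t" "Y t"] by (simp_all add: X_Suc Y_Suc)
qed (use X_0 Y_0 in auto)

lemma Y_Suc_gt_half: "1/2 < Y (Suc t)"
  using island_step_bounds[OF pd phi b(1) bounds] by (simp add: X_Suc Y_Suc)

lemma avg_bounds: "1/2 \<le> island_avg ps pd (Y t)" "island_avg ps pd (Y t) < 1"
  using island_avg_bounds[OF pd] bounds by (auto simp: less_imp_le)

lemma X_Suc_mono:
  assumes "X t \<le> X t'" "Y t \<le> Y t'"
  shows "X (Suc t) \<le> X (Suc t')"
proof -
  have "0 < X t" "0 < island_avg ps pd (Y t)"
    using bounds(1)[of t] avg_bounds(1)[of t] by simp_all
  then show ?thesis
    unfolding X_Suc using assms island_avg_mono[OF pd assms(2)] bounds(2) avg_bounds(2)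
    by (intro biased_update_mono[OF b(1)]) auto
qed

lemma eventually_monotone:
  obtains T0 where "monotone_on {T0..} (\<le>) (\<le>) X \<or> monotone_on {T0..} (\<le>) (\<ge>) X"
    and "monotone_on {T0..} (\<le>) (\<le>) Y \<or> monotone_on {T0..} (\<le>) (\<ge>) Y"
proof -
  define a where "a t = X (Suc t) - X t" for t
  define c where "c t = Y (Suc t) - Y t" for t
  define k where "k = (ps - pd) / (ps + pd)"
  have "0 < k"
    using pd by (simp add: k_def)
  have c_Suc: "c (Suc t) = phi * a (Suc t) + (1 - phi) * (k * c t)" for t
  proof -
    define u where "u = island_avg ps pd (Y (Suc t))"
    have "c (Suc t) = phi * a (Suc t) + (1 - phi) * (u - island_avg ps pd (Y t))"
      using Y_Suc[of "Suc t", folded u_def] Y_Suc[of t] by (simp add: c_def a_def algebra_simps)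
    also have "u - island_avg ps pd (Y t) = k * c t"
      by (simp add: u_def island_avg_diff c_def k_def)
    finally show ?thesis .
  qed
  obtain T0 where "(\<forall>t\<ge>T0. 0 \<le> a t) \<or> (\<forall>t\<ge>T0. a t \<le> 0)"
    and "(\<forall>t\<ge>T0. 0 \<le> c t) \<or> (\<forall>t\<ge>T0. c t \<le> 0)"
  proof (rule eventually_constant_signs)
    show "0 \<le> a (Suc t)" if "0 \<le> a t" "0 \<le> c t" for t
      using X_Suc_mono[of t "Suc t"] that by (simp add: a_def c_def)
    show "a (Suc t) \<le> 0" if "a t \<le> 0" "c t \<le> 0" for t
      using X_Suc_mono[of "Suc t" t] that by (simp add: a_def c_def)
    show "0 \<le> c (Suc t)" if "0 \<le> c t" "0 \<le> a (Suc t)" for t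
      using that phi \<open>0 < k\<close> by (simp add: c_Suc)
    show "c (Suc t) \<le> 0" if "c t \<le> 0" "a (Suc t) \<le> 0" for t
      using that phi \<open>0 < k\<close> by (simp add: c_Suc add_nonpos_nonpos mult_nonneg_nonpos)
  qed
  then show ?thesis
    by (intro that[of T0])
      (auto simp: a_def c_def intro: monotone_on_atLeast_SucI antitone_on_atLeast_SucI)
qed

lemma barrier:
  assumes xi: "1/2 < xi" "xi < 1" "g_fun xi b \<le> phi * (ps / pd - 1)"
    and eta: "island_avg ps pd eta = equilibrium_avg b xi"
    and start: "xi \<le> X t0" "eta \<le> Y t0" and "t0 \<le> t"
  shows "xi \<le> X t \<and> eta \<le> Y t"
  using \<open>t0 \<le> t\<close>
proof (induction rule: dec_induct)
  case base
  then show ?case using start by simp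
next
  case (step t)
  have M: "0 < equilibrium_avg b xi" "equilibrium_avg b xi < 1"
    using equilibrium_avg_bounds xi by auto
  have avg: "equilibrium_avg b xi \<le> island_avg ps pd (Y t)"
    using island_avg_mono[OF pd] step.IH eta by metis
  have "xi = biased_update b xi (equilibrium_avg b xi)"
    using biased_update_fixed_iff[where x = xi and m = "equilibrium_avg b xi" and b = b] xi M
    by simp
  also have "\<dots> \<le> X (Suc t)"
    unfolding X_Suc using xi M avg step.IH bounds(2)[of t] avg_bounds(2)[of t]
    by (intro biased_update_mono[OF b(1)]) auto
  finally have X: "xi \<le> X (Suc t)" .
  obtain c where "0 < c"
    and gap: "phi * xi + (1 - phi) * island_avg ps pd eta - eta = c * (phi * (ps / pd - 1) - g_fun xi b)"
    using equilibrium_gap[OF pd b xi(1,2) eta] .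
  moreover have "0 \<le> c * (phi * (ps / pd - 1) - g_fun xi b)"
    using \<open>0 < c\<close> xi(3) by simp
  ultimately have "eta \<le> phi * xi + (1 - phi) * equilibrium_avg b xi"
    unfolding eta[symmetric] by linarith
  also have "\<dots> \<le> Y (Suc t)"
    unfolding Y_Suc using X avg phi by (intro add_mono mult_left_mono) auto
  finally show ?case
    using X by simp
qed

lemma limit_gt_half:
  assumes lim: "X \<longlonglongrightarrow> Xs"
    and z: "1/2 < z" "z < 1" "g_fun z b \<le> phi * (ps / pd - 1)"
  shows "1/2 < Xs"
proof -
  txt \<open>The barrier pair (xi, eta xi) tends to (1/2, 1/2) as xi tends to 1/2, and Y 1 > 1/2.\<close>
  define eta where "eta xi = ((ps + pd) * equilibrium_avg b xi - pd) / (ps - pd)" for xi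
  have "(eta \<longlongrightarrow> eta (1/2)) (at_right (1/2))"
    unfolding eta_def equilibrium_avg_def using pd by (intro tendsto_intros) auto
  moreover have "eta (1/2) = 1/2"
    using pd by (simp add: eta_def equilibrium_avg_def field_simps)
  ultimately have "\<forall>\<^sub>F xi in at_right (1/2). eta xi < Y 1"
    using Y_Suc_gt_half[of 0] by (auto intro: order_tendstoD(2))
  moreover have "\<forall>\<^sub>F xi in at_right (1/2). xi < min z (X 1)"
    using z bounds(1)[of 1] by (intro order_tendstoD(2)[OF tendsto_ident_at]) auto
  moreover have "\<forall>\<^sub>F xi in at_right (1/2::real). 1/2 < xi"
    by (rule eventually_at_right_less)
  ultimately have "\<forall>\<^sub>F xi in at_right (1/2). 1/2 < xi \<and> xi < min z (X 1) \<and> eta xi < Y 1"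
    by (intro eventually_conj)
  then obtain xi where xi: "1/2 < xi" "xi < z" "xi < X 1" "eta xi < Y 1"
    by (auto dest: eventually_happens'[OF trivial_limit_at_right_real])
  have "g_fun xi b < g_fun z b"
    using xi z by (intro strict_mono_onD[OF g_fun_strict_mono[OF b]]) auto
  then have "xi \<le> X t" if "1 \<le> t" for t
    using barrier[of xi "eta xi" 1 t] island_avg_inverse[OF pd] xi z that
    by (auto simp: eta_def)
  then have "xi \<le> Xs"
    by (intro LIMSEQ_le_const[OF lim]) auto
  with xi show ?thesis
    by simp
qed

lemma limit_equilibrium:
  assumes X: "X \<longlonglongrightarrow> Xs" and Y: "Y \<longlonglongrightarrow> Ys" and "Xs < 1"
  shows "island_avg ps pd Ys = equilibrium_avg b Xs"
    and "Ys = phi * Xs + (1 - phi) * island_avg ps pd Ys"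
proof -
  have "1/2 \<le> Xs"
    using bounds(1) by (intro LIMSEQ_le_const[OF X]) (auto intro: less_imp_le)
  have "1/2 \<le> Ys"
    using bounds(3) by (intro LIMSEQ_le_const[OF Y]) auto
  moreover have "Ys \<le> 1"
    using bounds(4) by (intro LIMSEQ_le_const2[OF Y]) (auto intro: less_imp_le)
  ultimately have m: "1/2 \<le> island_avg ps pd Ys" "island_avg ps pd Ys < 1"
    using island_avg_bounds[OF pd] by auto
  have avg: "(\<lambda>t. island_avg ps pd (Y t)) \<longlonglongrightarrow> island_avg ps pd Ys"
    unfolding island_avg_def using pd by (intro tendsto_intros Y) auto
  have "0 < Xs powr b * island_avg ps pd Ys + (1 - Xs) powr b * (1 - island_avg ps pd Ys)"
    using \<open>1/2 \<le> Xs\<close> \<open>Xs < 1\<close> m by (intro add_pos_pos mult_pos_pos) auto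
  then have "(\<lambda>t. X (Suc t)) \<longlonglongrightarrow> biased_update b Xs (island_avg ps pd Ys)"
    unfolding X_Suc biased_update_def using \<open>1/2 \<le> Xs\<close> \<open>Xs < 1\<close>
    by (intro tendsto_intros X avg) auto
  then have "biased_update b Xs (island_avg ps pd Ys) = Xs"
    using LIMSEQ_unique[OF _ LIMSEQ_Suc[OF X]] by blast
  then show "island_avg ps pd Ys = equilibrium_avg b Xs"
    using biased_update_fixed_iff \<open>1/2 \<le> Xs\<close> \<open>Xs < 1\<close> m by simp
  have "(\<lambda>t. Y (Suc t)) \<longlonglongrightarrow> phi * Xs + (1 - phi) * island_avg ps pd Ys"
    unfolding Y_Suc by (intro tendsto_intros LIMSEQ_Suc[OF X] avg)
  then show "Ys = phi * Xs + (1 - phi) * island_avg ps pd Ys"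
    using LIMSEQ_unique[OF LIMSEQ_Suc[OF Y]] by blast
qed

lemma limits:
  assumes thr: "2 / (phi * (ps / pd - 1) + 2) \<le> b"
    and below: "\<forall>t\<ge>T. X t < x_hat phi (ps / pd) b"
    and X: "X \<longlonglongrightarrow> Xs" and Y: "Y \<longlonglongrightarrow> Ys"
  shows "Xs = x_hat phi (ps / pd) b"
    and "Ys = (phi * (ps / pd + 1) * Xs + 1 - phi) / (phi * (ps / pd) + 2 - phi)"
proof -
  define xh where "xh = x_hat phi (ps / pd) b"
  have K: "0 < phi * (ps / pd - 1)"
    using pd phi by simp
  have xh: "1/2 \<le> xh" "xh < 1" "g_fun xh b = phi * (ps / pd - 1)"
    using x_hat_iff[OF b K thr, of xh] by (simp_all add: xh_def)
  have "Xs \<le> xh"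
    using below by (intro LIMSEQ_le_const2[OF X] exI[of _ T]) (auto simp: xh_def less_imp_le)
  then have "Xs < 1"
    using xh(2) by simp
  have "1/2 < Xs"
    using below bounds(1)[of T] xh by (intro limit_gt_half[OF X, of xh]) (auto simp: xh_def)
  note equilibrium = limit_equilibrium[OF X Y \<open>Xs < 1\<close>]
  obtain c where "0 < c"
    and gap: "phi * Xs + (1 - phi) * island_avg ps pd Ys - Ys = c * (phi * (ps / pd - 1) - g_fun Xs b)"
    by (rule equilibrium_gap[OF pd b \<open>1/2 < Xs\<close> \<open>Xs < 1\<close> equilibrium(1)])
  have "c * (phi * (ps / pd - 1) - g_fun Xs b) = 0"
    using gap equilibrium(2) by linarith
  with \<open>0 < c\<close> have "g_fun Xs b = phi * (ps / pd - 1)"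
    by simp
  then show "Xs = x_hat phi (ps / pd) b"
    using x_hat_iff[OF b K thr, of Xs] \<open>1/2 < Xs\<close> \<open>Xs < 1\<close> by simp
  show "Ys = (phi * (ps / pd + 1) * Xs + 1 - phi) / (phi * (ps / pd) + 2 - phi)"
    using island_steady_y[OF pd _ equilibrium(2)] phi by simp
qed

theorem convergence:
  assumes thr: "2 / (phi * (ps / pd - 1) + 2) \<le> b"
    and below: "\<forall>t\<ge>T. X t < x_hat phi (ps / pd) b"
  shows "\<exists>T'>T.
           (monotone_on {T'..} (\<le>) (\<le>) X \<or> monotone_on {T'..} (\<le>) (\<ge>) X) \<and>
           (monotone_on {T'..} (\<le>) (\<le>) Y \<or> monotone_on {T'..} (\<le>) (\<ge>) Y) \<and>
           X \<longlonglongrightarrow> x_hat phi (ps / pd) b \<and>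
           Y \<longlonglongrightarrow> (phi * (ps / pd + 1) * x_hat phi (ps / pd) b + 1 - phi) / (phi * (ps / pd) + 2 - phi)"
proof -
  obtain T0 where X_mono: "monotone_on {T0..} (\<le>) (\<le>) X \<or> monotone_on {T0..} (\<le>) (\<ge>) X"
    and Y_mono: "monotone_on {T0..} (\<le>) (\<le>) Y \<or> monotone_on {T0..} (\<le>) (\<ge>) Y"
    by (rule eventually_monotone)
  have "\<bar>X t\<bar> \<le> 1" "\<bar>Y t\<bar> \<le> 1" for t
    using bounds[of t] by auto
  then obtain Xs Ys where X: "X \<longlonglongrightarrow> Xs" and Y: "Y \<longlonglongrightarrow> Ys"
    using convergent_if_eventually_monotone_bounded[OF X_mono]
      convergent_if_eventually_monotone_bounded[OF Y_mono]
    unfolding convergent_def by metis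
  have later: "monotone_on {max T0 (Suc T)..} (\<le>) (\<le>) f \<or> monotone_on {max T0 (Suc T)..} (\<le>) (\<ge>) f"
    if "monotone_on {T0..} (\<le>) (\<le>) f \<or> monotone_on {T0..} (\<le>) (\<ge>) f" for f :: "nat \<Rightarrow> real"
  proof -
    have "{max T0 (Suc T)..} \<subseteq> {T0..}"
      by auto
    then show ?thesis
      using that monotone_on_subset by blast
  qed
  show ?thesis
    using later[OF X_mono] later[OF Y_mono] X Y limits[OF thr below X Y]
    by (intro exI[of _ "max T0 (Suc T)"]) simp
qed

end

section \<open>Reduction of the network dynamics\<close>

definition island_symmetric :: "'a set \<Rightarrow> 'a set \<Rightarrow> ('a \<Rightarrow> real) \<Rightarrow> real \<Rightarrow> bool" where
  "island_symmetric V1 V2 u v \<longleftrightarrow> (\<forall>j\<in>V1. u j = v) \<and> (\<forall>j\<in>V2. u j = 1 - v)"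

lemma island_symmetricD: "island_symmetric V1 V2 u v \<Longrightarrow> j \<in> V1 \<Longrightarrow> u j = v"
  by (simp add: island_symmetric_def)

lemma two_island_degree:
  assumes G: "two_island E V1 V2 n ps pd" and "j \<in> V1 \<union> V2"
  shows "real (card (nbrs E (V1 \<union> V2) j)) = real n * (ps + pd)"
proof -
  have fin: "finite {k\<in>V1. E j k}" "finite {k\<in>V2. E j k}"
    and disj: "{k\<in>V1. E j k} \<inter> {k\<in>V2. E j k} = {}"
    using G by (auto simp: two_island_def)
  have "nbrs E (V1 \<union> V2) j = {k\<in>V1. E j k} \<union> {k\<in>V2. E j k}"
    by (auto simp: nbrs_def)
  then have "real (card (nbrs E (V1 \<union> V2) j)) = real (card {k\<in>V1. E j k}) + real (card {k\<in>V2. E j k})"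
    using card_Un_disjoint[OF fin disj] by simp
  moreover have "real (card {k\<in>V1. E j k}) + real (card {k\<in>V2. E j k}) = real n * (ps + pd)"
    using G assms(2) by (auto simp: two_island_def algebra_simps)
  ultimately show ?thesis
    by simp
qed

lemma two_island_nbrs_sum:
  fixes f :: "'a \<Rightarrow> real"
  assumes G: "two_island E V1 V2 n ps pd" and f: "island_symmetric V1 V2 f v"
  shows "j \<in> V1 \<Longrightarrow> (\<Sum>k\<in>nbrs E (V1 \<union> V2) j. f k) = real n * (ps + pd) * island_avg ps pd v"
    and "j \<in> V2 \<Longrightarrow> (\<Sum>k\<in>nbrs E (V1 \<union> V2) j. f k) = real n * (ps + pd) * (1 - island_avg ps pd v)"
proof -
  have fin: "finite {k\<in>V1. E j k}" "finite {k\<in>V2. E j k}"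
    and disj: "{k\<in>V1. E j k} \<inter> {k\<in>V2. E j k} = {}"
    and "0 < ps + pd"
    using G by (auto simp: two_island_def)
  have deg1: "real (card {k\<in>V1. E j k}) = real n * ps" "real (card {k\<in>V2. E j k}) = real n * pd"
    if "j \<in> V1"
    using G that by (auto simp: two_island_def)
  have deg2: "real (card {k\<in>V2. E j k}) = real n * ps" "real (card {k\<in>V1. E j k}) = real n * pd"
    if "j \<in> V2"
    using G that by (auto simp: two_island_def)
  have N: "nbrs E (V1 \<union> V2) j = {k\<in>V1. E j k} \<union> {k\<in>V2. E j k}"
    by (auto simp: nbrs_def)
  have sum: "(\<Sum>k\<in>nbrs E (V1 \<union> V2) j. f k)
      = real (card {k\<in>V1. E j k}) * v + real (card {k\<in>V2. E j k}) * (1 - v)"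
    using f unfolding N sum.union_disjoint[OF fin disj] by (simp add: island_symmetric_def)
  show "(\<Sum>k\<in>nbrs E (V1 \<union> V2) j. f k) = real n * (ps + pd) * island_avg ps pd v" if "j \<in> V1"
    using \<open>0 < ps + pd\<close> unfolding sum deg1[OF that] by (simp add: island_avg_def field_simps)
  show "(\<Sum>k\<in>nbrs E (V1 \<union> V2) j. f k) = real n * (ps + pd) * (1 - island_avg ps pd v)" if "j \<in> V2"
    using \<open>0 < ps + pd\<close> unfolding sum deg2[OF that] by (simp add: island_avg_def field_simps)
qed

lemma dual_dynamicsD:
  assumes "dual_dynamics E V phi b x y" "j \<in> V"
  shows "x (Suc t) j = x t j powr b * (\<Sum>k\<in>nbrs E V j. y t k)
      / (x t j powr b * (\<Sum>k\<in>nbrs E V j. y t k)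
         + (1 - x t j) powr b * (real (card (nbrs E V j)) - (\<Sum>k\<in>nbrs E V j. y t k)))"
    and "y (Suc t) j = phi * x (Suc t) j + (1 - phi) * ((\<Sum>k\<in>nbrs E V j. y t k) / real (card (nbrs E V j)))"
  using assms unfolding dual_dynamics_def Let_def sum_divide_distrib by auto

lemma two_island_node_step:
  fixes x y :: "nat \<Rightarrow> 'a \<Rightarrow> real"
  assumes G: "two_island E V1 V2 n ps pd" and dyn: "dual_dynamics E (V1 \<union> V2) phi b x y"
    and j: "j \<in> V1 \<union> V2" and sum: "(\<Sum>k\<in>nbrs E (V1 \<union> V2) j. y t k) = real n * (ps + pd) * \<mu>"
  shows "x (Suc t) j = biased_update b (x t j) \<mu>"
    and "y (Suc t) j = phi * x (Suc t) j + (1 - phi) * \<mu>"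
proof -
  define d where "d = real n * (ps + pd)"
  have "0 < pd" "pd < ps" "1 \<le> n"
    using G by (auto simp: two_island_def)
  then have "0 < d"
    by (simp add: d_def)
  have card: "real (card (nbrs E (V1 \<union> V2) j)) = d"
    using two_island_degree[OF G j] by (simp add: d_def)
  note update = dual_dynamicsD[OF dyn j, of t, unfolded sum[folded d_def] card]
  have "x (Suc t) j = x t j powr b * (d * \<mu>) / (x t j powr b * (d * \<mu>) + (1 - x t j) powr b * (d - d * \<mu>))"
    by (rule update(1))
  also have "\<dots> = biased_update b (x t j) \<mu>"
    by (rule biased_update_scaled[OF \<open>0 < d\<close>])
  finally show "x (Suc t) j = biased_update b (x t j) \<mu>" .
  show "y (Suc t) j = phi * x (Suc t) j + (1 - phi) * \<mu>"
    using update(2) \<open>0 < d\<close> by simp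
qed

lemma two_island_step:
  fixes x y :: "nat \<Rightarrow> 'a \<Rightarrow> real"
  assumes G: "two_island E V1 V2 n ps pd" and dyn: "dual_dynamics E (V1 \<union> V2) phi b x y"
    and sx: "island_symmetric V1 V2 (x t) X" and sy: "island_symmetric V1 V2 (y t) Y"
    and X: "0 < X" "X < 1" and Y: "1/2 \<le> Y" "Y < 1"
  defines "X' \<equiv> biased_update b X (island_avg ps pd Y)"
  shows "island_symmetric V1 V2 (x (Suc t)) X'"
    and "island_symmetric V1 V2 (y (Suc t)) (phi * X' + (1 - phi) * island_avg ps pd Y)"
proof -
  define m where "m = island_avg ps pd Y"
  have "0 < pd" "pd < ps"
    using G by (auto simp: two_island_def)
  then have m: "0 < m" "m < 1"
    using island_avg_bounds[of pd ps Y] Y by (auto simp: m_def)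
  have V1: "x (Suc t) j = X' \<and> y (Suc t) j = phi * X' + (1 - phi) * m" if "j \<in> V1" for j
    using two_island_node_step[OF G dyn _ two_island_nbrs_sum(1)[OF G sy that]] sx that
    by (simp add: island_symmetric_def X'_def m_def)
  have V2: "x (Suc t) j = 1 - X' \<and> y (Suc t) j = 1 - (phi * X' + (1 - phi) * m)" if "j \<in> V2" for j
  proof -
    note step = two_island_node_step[OF G dyn _ two_island_nbrs_sum(2)[OF G sy that]]
    have "x t j = 1 - X"
      using sx that by (simp add: island_symmetric_def)
    then have x': "x (Suc t) j = 1 - X'"
      using step(1) that biased_update_complement[OF X m] by (simp add: X'_def m_def)
    moreover have "y (Suc t) j = 1 - (phi * X' + (1 - phi) * m)"
      using step(2) that unfolding x' by (simp add: m_def algebra_simps)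
    ultimately show ?thesis ..
  qed
  show "island_symmetric V1 V2 (x (Suc t)) X'"
    and "island_symmetric V1 V2 (y (Suc t)) (phi * X' + (1 - phi) * island_avg ps pd Y)"
    using V1 V2 by (simp_all add: island_symmetric_def m_def)
qed

lemma two_island_reduction:
  fixes x y :: "nat \<Rightarrow> 'a \<Rightarrow> real"
  assumes G: "two_island E V1 V2 n ps pd" and dyn: "dual_dynamics E (V1 \<union> V2) phi b x y"
    and phi: "0 < phi" "phi < 1" and "0 < b"
    and init: "island_symmetric V1 V2 (x 0) x0" "island_symmetric V1 V2 (y 0) y0"
    and x0: "1/2 < x0" "x0 < 1" and y0: "1/2 \<le> y0" "y0 < 1" and i: "i \<in> V1"
  shows "x (Suc t) i = biased_update b (x t i) (island_avg ps pd (y t i))"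
    and "y (Suc t) i = phi * x (Suc t) i + (1 - phi) * island_avg ps pd (y t i)"
proof -
  have pd: "0 < pd" "pd < ps"
    using G by (auto simp: two_island_def)
  define x' where "x' t = biased_update b (x t i) (island_avg ps pd (y t i))" for t
  define y' where "y' t = phi * x' t + (1 - phi) * island_avg ps pd (y t i)" for t
  have step: "x (Suc t) i = x' t \<and> y (Suc t) i = y' t
      \<and> island_symmetric V1 V2 (x (Suc t)) (x' t) \<and> island_symmetric V1 V2 (y (Suc t)) (y' t)"
    if "island_symmetric V1 V2 (x t) (x t i)" "island_symmetric V1 V2 (y t) (y t i)"
      and "1/2 < x t i" "x t i < 1" "1/2 \<le> y t i" "y t i < 1" for t
    using two_island_step[OF G dyn that(1,2) _ that(4-6)] that(3) island_symmetricD[OF _ i]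
    by (simp add: x'_def y'_def)
  have inv: "island_symmetric V1 V2 (x t) (x t i) \<and> island_symmetric V1 V2 (y t) (y t i)
      \<and> 1/2 < x t i \<and> x t i < 1 \<and> 1/2 \<le> y t i \<and> y t i < 1" for t
  proof (induction t)
    case 0
    then show ?case
      using init x0 y0 island_symmetricD[OF init(1) i] island_symmetricD[OF init(2) i] by simp
  next
    case (Suc t)
    then show ?case
      using step[of t] island_step_bounds[OF pd phi \<open>0 < b\<close>, of "x t i" "y t i"]
      by (simp add: x'_def y'_def)
  qed
  then show "x (Suc t) i = biased_update b (x t i) (island_avg ps pd (y t i))"
    and "y (Suc t) i = phi * x (Suc t) i + (1 - phi) * island_avg ps pd (y t i)"
    using step[of t] by (simp_all add: x'_def y'_def)
qed

theorem lemmaB6: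
  fixes E :: "'a \<Rightarrow> 'a \<Rightarrow> bool" and V1 V2 :: "'a set" and n :: nat
    and ps pd phi b x0 y0 :: real
    and x y :: "nat \<Rightarrow> 'a \<Rightarrow> real" and i :: 'a and T :: nat
  assumes G: "two_island E V1 V2 n ps pd"
    and phi: "0 < phi" "phi < 1"
    and b: "2 / (phi * (ps / pd - 1) + 2) \<le> b" "b < 1"
    and dyn: "dual_dynamics E (V1 \<union> V2) phi b x y"
    and x0: "1/2 < x0" "x0 < 1"
    and y0: "1/2 \<le> y0" "y0 \<le> x0"
    and init1: "\<forall>j\<in>V1. x 0 j = x0 \<and> y 0 j = y0"
    and init2: "\<forall>j\<in>V2. x 0 j = 1 - x0 \<and> y 0 j = 1 - y0"
    and i: "i \<in> V1"
    and T: "T > 0" "\<forall>t\<ge>T. x t i < x_hat phi (ps / pd) b"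
  shows "\<exists>T'>T.
           (monotone_on {T'..} (\<le>) (\<le>) (\<lambda>t. x t i) \<or> monotone_on {T'..} (\<le>) (\<ge>) (\<lambda>t. x t i)) \<and>
           (monotone_on {T'..} (\<le>) (\<le>) (\<lambda>t. y t i) \<or> monotone_on {T'..} (\<le>) (\<ge>) (\<lambda>t. y t i)) \<and>
           (\<lambda>t. x t i) \<longlonglongrightarrow> x_hat phi (ps / pd) b \<and>
           (\<lambda>t. y t i) \<longlonglongrightarrow>
              (phi * (ps / pd + 1) * x_hat phi (ps / pd) b + 1 - phi) / (phi * (ps / pd) + 2 - phi)"
proof -
  have pd: "0 < pd" "pd < ps"
    using G by (auto simp: two_island_def)
  then have "0 < 2 / (phi * (ps / pd - 1) + 2)"
    using phi by (simp add: add_pos_nonneg)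
  with b(1) have "0 < b"
    by linarith
  have init: "island_symmetric V1 V2 (x 0) x0" "island_symmetric V1 V2 (y 0) y0"
    using init1 init2 by (simp_all add: island_symmetric_def)
  have "y0 < 1"
    using y0(2) x0(2) by simp
  note reduction = two_island_reduction[OF G dyn phi \<open>0 < b\<close> init x0 y0(1) \<open>y0 < 1\<close> i]
  interpret orbit: island_orbit ps pd phi b "\<lambda>t. x t i" "\<lambda>t. y t i"
    using pd phi \<open>0 < b\<close> b(2) reduction x0 y0(1) \<open>y0 < 1\<close> init1 i by unfold_locales auto
  show ?thesis
    using orbit.convergence[OF b(1) T(2)] .
qed

end
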